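(* If a disjunctive program $P$ has an inconsistent module sequence, then $P$ is inconsistent.
   Context: A disjunctive program is a set of rules $A_1\vee\dots\vee A_m\leftarrow L_1,\dots,L_n$ ($m>0$, $n\ge0$), $A_j$ atoms, $L_i$ atoms or negated atoms $\mathtt{not}\,A$, possibly with function symbols. $\mathsf{Ground}(P)$ is its ground instantiation. For a set $M$ of ground atoms, $P^M$ is obtained from $\mathsf{Ground}(P)$ by deleting rules having some $\mathtt{not}\,B$ in the body with $B\in M$ and deleting the negative literals from the remaining rules; $M$ is a stable model iff it is a minimal Herbrand model of $P^M$. A program (ground or not) is consistent iff it has at least one stable model, inconsistent otherwise. The dependency graph has ground atoms as vertices and an edge $A\to B$ whenever some $r\in\mathsf{Ground}(P)$ has $A$ in its head and $B$ occurring in $r$ (body or head); $A$ depends on $B$ if there is a directed path from $A$ to $B$ (every atom depends on itself). With $GH$ the set of ground head atoms of $\mathsf{Ground}(P)$ and an enumeration $p_1,p_2,\dots$ of $GH$, the induced module sequence is $P_1=\{r\in\mathsf{Ground}(P)\mid p_1$ depends on some atom of $head(r)\}$, $P_{i+1}=P_i\cup\{r\in\mathsf{Ground}(P)\mid p_{i+1}$ depends on some atom of $head(r)\}$. A module sequence is inconsistent if some $P_i$ is inconsistent, and consistent otherwise. *)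

theory Defs
  imports Main
begin

datatype ('f,'v) trm = Var 'v | Fn 'f "('f,'v) trm list"

datatype ('p,'f,'v) atom = Atom 'p "('f,'v) trm list"

datatype ('p,'f,'v) lit = Pos "('p,'f,'v) atom" | Neg "('p,'f,'v) atom"

text \<open>A rule  A1 v ... v Am <- L1, ..., Ln.\<close>
datatype ('p,'f,'v) rule = Rule (head: "('p,'f,'v) atom list") (body: "('p,'f,'v) lit list")

type_synonym ('p,'f,'v) program = "('p,'f,'v) rule set"

definition disjunctive_program :: "('p,'f,'v) program \<Rightarrow> bool" where
  "disjunctive_program P \<longleftrightarrow> (\<forall>r\<in>P. head r \<noteq> [])"

fun lit_atom :: "('p,'f,'v) lit \<Rightarrow> ('p,'f,'v) atom" where
  "lit_atom (Pos a) = a" | "lit_atom (Neg a) = a"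

definition rule_atoms :: "('p,'f,'v) rule \<Rightarrow> ('p,'f,'v) atom set" where
  "rule_atoms r = set (head r) \<union> lit_atom ` set (body r)"

fun vars_trm :: "('f,'v) trm \<Rightarrow> 'v set" where
  "vars_trm (Var x) = {x}"
| "vars_trm (Fn f ts) = (\<Union>t\<in>set ts. vars_trm t)"

fun vars_atom :: "('p,'f,'v) atom \<Rightarrow> 'v set" where
  "vars_atom (Atom p ts) = (\<Union>t\<in>set ts. vars_trm t)"

definition ground_atom :: "('p,'f,'v) atom \<Rightarrow> bool" where
  "ground_atom a \<longleftrightarrow> vars_atom a = {}"

definition ground_rule :: "('p,'f,'v) rule \<Rightarrow> bool" where
  "ground_rule r \<longleftrightarrow> (\<forall>a\<in>rule_atoms r. ground_atom a)"

fun subst_trm :: "('v \<Rightarrow> ('f,'v) trm) \<Rightarrow> ('f,'v) trm \<Rightarrow> ('f,'v) trm" where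
  "subst_trm \<sigma> (Var x) = \<sigma> x"
| "subst_trm \<sigma> (Fn f ts) = Fn f (map (subst_trm \<sigma>) ts)"

fun subst_atom :: "('v \<Rightarrow> ('f,'v) trm) \<Rightarrow> ('p,'f,'v) atom \<Rightarrow> ('p,'f,'v) atom" where
  "subst_atom \<sigma> (Atom p ts) = Atom p (map (subst_trm \<sigma>) ts)"

fun subst_lit :: "('v \<Rightarrow> ('f,'v) trm) \<Rightarrow> ('p,'f,'v) lit \<Rightarrow> ('p,'f,'v) lit" where
  "subst_lit \<sigma> (Pos a) = Pos (subst_atom \<sigma> a)"
| "subst_lit \<sigma> (Neg a) = Neg (subst_atom \<sigma> a)"

definition subst_rule :: "('v \<Rightarrow> ('f,'v) trm) \<Rightarrow> ('p,'f,'v) rule \<Rightarrow> ('p,'f,'v) rule" where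
  "subst_rule \<sigma> r = Rule (map (subst_atom \<sigma>) (head r)) (map (subst_lit \<sigma>) (body r))"

definition Ground :: "('p,'f,'v) program \<Rightarrow> ('p,'f,'v) program" where
  "Ground P = {subst_rule \<sigma> r | r \<sigma>. r \<in> P \<and> ground_rule (subst_rule \<sigma> r)}"

definition reduct :: "('p,'f,'v) program \<Rightarrow> ('p,'f,'v) atom set \<Rightarrow> ('p,'f,'v) program" where
  "reduct P M = {Rule (head r) [l\<leftarrow>body r. case l of Pos _ \<Rightarrow> True | Neg _ \<Rightarrow> False] | r.
                   r \<in> Ground P \<and> (\<forall>B. Neg B \<in> set (body r) \<longrightarrow> B \<notin> M)}"

fun lit_true :: "('p,'f,'v) atom set \<Rightarrow> ('p,'f,'v) lit \<Rightarrow> bool" where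
  "lit_true M (Pos a) = (a \<in> M)"
| "lit_true M (Neg a) = (a \<notin> M)"

definition is_model :: "('p,'f,'v) atom set \<Rightarrow> ('p,'f,'v) program \<Rightarrow> bool" where
  "is_model M R \<longleftrightarrow> (\<forall>r\<in>R. (\<forall>l\<in>set (body r). lit_true M l) \<longrightarrow> (\<exists>a\<in>set (head r). a \<in> M))"

text \<open>Herbrand interpretations: sets of ground atoms.\<close>
definition minimal_herbrand_model :: "('p,'f,'v) atom set \<Rightarrow> ('p,'f,'v) program \<Rightarrow> bool" where
  "minimal_herbrand_model M R \<longleftrightarrow>
     (\<forall>a\<in>M. ground_atom a) \<and> is_model M R \<and> (\<forall>N. N \<subset> M \<longrightarrow> \<not> is_model N R)"

definition stable_model :: "('p,'f,'v) program \<Rightarrow> ('p,'f,'v) atom set \<Rightarrow> bool" where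
  "stable_model P M \<longleftrightarrow> minimal_herbrand_model M (reduct P M)"

definition consistent :: "('p,'f,'v) program \<Rightarrow> bool" where
  "consistent P \<longleftrightarrow> (\<exists>M. stable_model P M)"

definition dep_edges :: "('p,'f,'v) program \<Rightarrow> (('p,'f,'v) atom \<times> ('p,'f,'v) atom) set" where
  "dep_edges P = {(A, B) | A B r. r \<in> Ground P \<and> A \<in> set (head r) \<and> B \<in> rule_atoms r}"

text \<open>A depends on B: directed path from A to B (reflexive on all atoms).\<close>
definition depends :: "('p,'f,'v) program \<Rightarrow> ('p,'f,'v) atom \<Rightarrow> ('p,'f,'v) atom \<Rightarrow> bool" where
  "depends P A B \<longleftrightarrow> (A, B) \<in> (dep_edges P)\<^sup>*"

definition GH :: "('p,'f,'v) program \<Rightarrow> ('p,'f,'v) atom set" where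
  "GH P = {a | a r. r \<in> Ground P \<and> a \<in> set (head r)}"

text \<open>An enumeration p_0, p_1, ... of GH (indices start at 0): a bijection from an
  initial segment of the naturals (finite or all of nat) onto GH.\<close>
definition enumeration :: "('p,'f,'v) program \<Rightarrow> nat set \<Rightarrow> (nat \<Rightarrow> ('p,'f,'v) atom) \<Rightarrow> bool" where
  "enumeration P N p \<longleftrightarrow> (N = UNIV \<or> (\<exists>k. N = {..<k})) \<and> bij_betw p N (GH P)"

definition module :: "('p,'f,'v) program \<Rightarrow> (nat \<Rightarrow> ('p,'f,'v) atom) \<Rightarrow> nat \<Rightarrow> ('p,'f,'v) program" where
  "module P p i = {r \<in> Ground P. \<exists>j\<le>i. \<exists>a\<in>set (head r). depends P (p j) a}"

definition inconsistent_module_sequence :: "('p,'f,'v) program \<Rightarrow> nat set \<Rightarrow> (nat \<Rightarrow> ('p,'f,'v) atom) \<Rightarrow> bool" where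
  "inconsistent_module_sequence P N p \<longleftrightarrow> (\<exists>i\<in>N. \<not> consistent (module P p i))"

end

theory Submission
  imports Defs
begin

text \<open>Every module P_i is the bottom of a splitting set U, namely the atoms reachable in the
  dependency graph from p_0, ..., p_i. By the Splitting Set Theorem a stable model M of P
  restricts to the stable model M \<inter> U of the bottom: a smaller model N of the bottom's reduct
  would give the smaller model N \<union> (M - U) of the reduct of P, since a rule outside the bottom
  whose body holds in M has its true head atom outside U.\<close>

lemma subst_trm_ground: "vars_trm t = {} \<Longrightarrow> subst_trm \<sigma> t = t"
  by (induction t) (auto intro: map_idI)

lemma subst_trm_Var: "subst_trm Var t = t"
  by (induction t) (auto intro: map_idI)

lemma subst_atom_ground: "ground_atom a \<Longrightarrow> subst_atom \<sigma> a = a"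
  by (cases a) (auto simp: ground_atom_def intro!: map_idI subst_trm_ground)

lemma subst_atom_Var: "subst_atom Var a = a"
  by (cases a) (auto simp: subst_trm_Var intro!: map_idI)

lemma subst_lit_ground: "ground_atom (lit_atom l) \<Longrightarrow> subst_lit \<sigma> l = l"
  by (cases l) (auto simp: subst_atom_ground)

lemma subst_lit_Var: "subst_lit Var l = l"
  by (cases l) (auto simp: subst_atom_Var)

lemma subst_rule_ground: "ground_rule r \<Longrightarrow> subst_rule \<sigma> r = r"
  unfolding ground_rule_def rule_atoms_def subst_rule_def
  by (cases r) (auto intro!: map_idI subst_atom_ground subst_lit_ground)

lemma subst_rule_Var: "subst_rule Var r = r"
  unfolding subst_rule_def
  by (cases r) (auto intro!: map_idI simp: subst_atom_Var subst_lit_Var)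

lemma ground_rule_Ground: "r \<in> Ground P \<Longrightarrow> ground_rule r"
  unfolding Ground_def by auto

lemma Ground_ground_program:
  assumes "\<And>r. r \<in> Q \<Longrightarrow> ground_rule r"
  shows "Ground Q = Q"
proof
  show "Ground Q \<subseteq> Q"
    using assms by (auto simp: Ground_def subst_rule_ground)
  show "Q \<subseteq> Ground Q"
  proof
    fix r assume "r \<in> Q"
    then show "r \<in> Ground Q"
      unfolding Ground_def using assms subst_rule_Var[of r] by (metis (mono_tags, lifting) mem_Collect_eq)
  qed
qed

lemma Ground_subset_Ground: "Q \<subseteq> Ground P \<Longrightarrow> Ground Q = Q"
  using Ground_ground_program ground_rule_Ground by blast

lemma head_subset_rule_atoms: "set (head r) \<subseteq> rule_atoms r"
  unfolding rule_atoms_def by blast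

lemma body_atom_in_rule_atoms: "l \<in> set (body r) \<Longrightarrow> lit_atom l \<in> rule_atoms r"
  unfolding rule_atoms_def by blast

definition positive_part :: "('p,'f,'v) rule \<Rightarrow> ('p,'f,'v) rule" where
  "positive_part r = Rule (head r) [l\<leftarrow>body r. case l of Pos _ \<Rightarrow> True | Neg _ \<Rightarrow> False]"

lemma head_positive_part [simp]: "head (positive_part r) = head r"
  by (simp add: positive_part_def)

lemma reduct_eq_positive_parts:
  "reduct P M = {positive_part r | r. r \<in> Ground P \<and> (\<forall>B. Neg B \<in> set (body r) \<longrightarrow> B \<notin> M)}"
  unfolding reduct_def positive_part_def by simp

lemma body_positive_part_true_iff:
  "(\<forall>l\<in>set (body (positive_part r)). lit_true M l) \<longleftrightarrow> (\<forall>a. Pos a \<in> set (body r) \<longrightarrow> a \<in> M)"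
proof -
  have case_Pos: "(case l of Pos _ \<Rightarrow> True | Neg _ \<Rightarrow> False) \<longleftrightarrow> (\<exists>a. l = Pos a)" for l :: "('p,'f,'v) lit"
    by (cases l) auto
  have "set (body (positive_part r)) = {l \<in> set (body r). \<exists>a. l = Pos a}"
    unfolding positive_part_def by (simp add: case_Pos)
  then show ?thesis by auto
qed

lemma is_model_reduct_iff:
  "is_model N (reduct P M) \<longleftrightarrow>
     (\<forall>r\<in>Ground P. (\<forall>B. Neg B \<in> set (body r) \<longrightarrow> B \<notin> M) \<longrightarrow>
        (\<forall>a. Pos a \<in> set (body r) \<longrightarrow> a \<in> N) \<longrightarrow> (\<exists>a\<in>set (head r). a \<in> N))"
proof
  assume model: "is_model N (reduct P M)"
  show "\<forall>r\<in>Ground P. (\<forall>B. Neg B \<in> set (body r) \<longrightarrow> B \<notin> M) \<longrightarrow>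
        (\<forall>a. Pos a \<in> set (body r) \<longrightarrow> a \<in> N) \<longrightarrow> (\<exists>a\<in>set (head r). a \<in> N)"
  proof (intro ballI impI)
    fix r assume "r \<in> Ground P" "\<forall>B. Neg B \<in> set (body r) \<longrightarrow> B \<notin> M"
      and "\<forall>a. Pos a \<in> set (body r) \<longrightarrow> a \<in> N"
    then have "positive_part r \<in> reduct P M"
      and "\<forall>l\<in>set (body (positive_part r)). lit_true N l"
      unfolding reduct_eq_positive_parts body_positive_part_true_iff by blast+
    with model show "\<exists>a\<in>set (head r). a \<in> N"
      unfolding is_model_def by fastforce
  qed
next
  assume rules: "\<forall>r\<in>Ground P. (\<forall>B. Neg B \<in> set (body r) \<longrightarrow> B \<notin> M) \<longrightarrow>
        (\<forall>a. Pos a \<in> set (body r) \<longrightarrow> a \<in> N) \<longrightarrow> (\<exists>a\<in>set (head r). a \<in> N)"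
  show "is_model N (reduct P M)"
    unfolding is_model_def reduct_eq_positive_parts
    using rules by (auto simp only: body_positive_part_true_iff head_positive_part)
qed

definition bottom :: "('p,'f,'v) program \<Rightarrow> ('p,'f,'v) atom set \<Rightarrow> ('p,'f,'v) program" where
  "bottom P U = {r \<in> Ground P. set (head r) \<inter> U \<noteq> {}}"

definition splitting_set :: "('p,'f,'v) program \<Rightarrow> ('p,'f,'v) atom set \<Rightarrow> bool" where
  "splitting_set P U \<longleftrightarrow> (\<forall>r\<in>bottom P U. rule_atoms r \<subseteq> U)"

lemma Ground_bottom: "Ground (bottom P U) = bottom P U"
  by (rule Ground_subset_Ground) (auto simp: bottom_def)

lemma is_model_reduct_bottom:
  assumes U: "splitting_set P U" and M: "is_model M (reduct P M)"
  shows "is_model (M \<inter> U) (reduct (bottom P U) (M \<inter> U))"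
  unfolding is_model_reduct_iff Ground_bottom
proof (intro ballI impI)
  fix r
  assume r: "r \<in> bottom P U" and neg: "\<forall>B. Neg B \<in> set (body r) \<longrightarrow> B \<notin> M \<inter> U"
    and pos: "\<forall>a. Pos a \<in> set (body r) \<longrightarrow> a \<in> M \<inter> U"
  have atoms: "rule_atoms r \<subseteq> U" using U r by (simp add: splitting_set_def)
  have "\<forall>B. Neg B \<in> set (body r) \<longrightarrow> B \<notin> M"
    using neg atoms body_atom_in_rule_atoms[of "Neg _" r] by auto
  moreover have "r \<in> Ground P" using r by (simp add: bottom_def)
  ultimately obtain a where "a \<in> set (head r)" "a \<in> M"
    using M pos unfolding is_model_reduct_iff by blast
  moreover have "a \<in> U" using atoms head_subset_rule_atoms \<open>a \<in> set (head r)\<close> by blast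
  ultimately show "\<exists>a\<in>set (head r). a \<in> M \<inter> U" by blast
qed

lemma is_model_reduct_extend:
  assumes U: "splitting_set P U" and M: "is_model M (reduct P M)" and "N \<subseteq> M \<inter> U"
    and N: "is_model N (reduct (bottom P U) (M \<inter> U))"
  shows "is_model (N \<union> (M - U)) (reduct P M)"
  unfolding is_model_reduct_iff
proof clarify
  fix r
  assume r: "r \<in> Ground P" and neg: "\<forall>B. Neg B \<in> set (body r) \<longrightarrow> B \<notin> M"
    and pos: "\<forall>a. Pos a \<in> set (body r) \<longrightarrow> a \<in> N \<union> (M - U)"
  show "\<exists>a\<in>set (head r). a \<in> N \<union> (M - U)"
  proof (cases "r \<in> bottom P U")
    case True
    have "\<forall>a. Pos a \<in> set (body r) \<longrightarrow> a \<in> N"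
    proof (intro allI impI)
      fix a assume "Pos a \<in> set (body r)"
      then have "a \<in> U"
        using U True body_atom_in_rule_atoms[of "Pos a" r] by (auto simp: splitting_set_def)
      with pos \<open>Pos a \<in> set (body r)\<close> show "a \<in> N" by blast
    qed
    with N True neg show ?thesis
      unfolding is_model_reduct_iff Ground_bottom by blast
  next
    case False
    have "\<forall>a. Pos a \<in> set (body r) \<longrightarrow> a \<in> M" using pos \<open>N \<subseteq> M \<inter> U\<close> by blast
    with M r neg obtain a where "a \<in> set (head r)" "a \<in> M"
      unfolding is_model_reduct_iff by blast
    moreover from False r \<open>a \<in> set (head r)\<close> have "a \<notin> U" by (auto simp: bottom_def)
    ultimately show ?thesis by blast
  qed
qed

theorem stable_model_bottom:
  assumes U: "splitting_set P U" and "stable_model P M"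
  shows "stable_model (bottom P U) (M \<inter> U)"
proof -
  have ground: "\<forall>a\<in>M. ground_atom a" and M: "is_model M (reduct P M)"
    and minimal: "\<forall>N. N \<subset> M \<longrightarrow> \<not> is_model N (reduct P M)"
    using \<open>stable_model P M\<close> by (auto simp: stable_model_def minimal_herbrand_model_def)
  have "\<not> is_model N (reduct (bottom P U) (M \<inter> U))" if "N \<subset> M \<inter> U" for N
  proof
    assume "is_model N (reduct (bottom P U) (M \<inter> U))"
    then have "is_model (N \<union> (M - U)) (reduct P M)"
      using is_model_reduct_extend[OF U M] \<open>N \<subset> M \<inter> U\<close> by blast
    moreover have "N \<union> (M - U) \<subset> M" using \<open>N \<subset> M \<inter> U\<close> by blast
    ultimately show False using minimal by blast
  qed
  with ground is_model_reduct_bottom[OF U M] show ?thesis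
    by (auto simp: stable_model_def minimal_herbrand_model_def)
qed

corollary consistent_bottom:
  "splitting_set P U \<Longrightarrow> consistent P \<Longrightarrow> consistent (bottom P U)"
  unfolding consistent_def using stable_model_bottom by blast

lemma splitting_set_dependency_closure:
  "splitting_set P ((dep_edges P)\<^sup>* `` S)"
  unfolding splitting_set_def
proof (intro ballI subsetI)
  fix r b
  assume r: "r \<in> bottom P ((dep_edges P)\<^sup>* `` S)" and b: "b \<in> rule_atoms r"
  then obtain a where a: "a \<in> set (head r)" "a \<in> (dep_edges P)\<^sup>* `` S" and "r \<in> Ground P"
    unfolding bottom_def by blast
  then have "(a, b) \<in> dep_edges P" unfolding dep_edges_def using b by blast
  with a(2) show "b \<in> (dep_edges P)\<^sup>* `` S" by (meson Image_iff rtrancl.rtrancl_into_rtrancl)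
qed

lemma module_eq_bottom: "module P p i = bottom P ((dep_edges P)\<^sup>* `` (p ` {..i}))"
  unfolding module_def bottom_def depends_def by blast

theorem proposition3p8:
  fixes P :: "('p,'f,'v) program"
  assumes "disjunctive_program P"
    and "enumeration P N p"
    and "inconsistent_module_sequence P N p"
  shows "\<not> consistent P"
proof
  assume "consistent P"
  from assms(3) obtain i where "\<not> consistent (module P p i)"
    unfolding inconsistent_module_sequence_def by blast
  moreover have "consistent (module P p i)"
    unfolding module_eq_bottom
    using consistent_bottom[OF splitting_set_dependency_closure \<open>consistent P\<close>] .
  ultimately show False by blast
qed

end
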